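(* Let $a,b>0$ with $\tfrac12\le ab\le 1$ and $\delta=\tfrac1b-a$. Define $\beta_0=\chi_{[0,1/b)}$, $\gamma_0=\tfrac1{\sqrt2}\big(\chi_{[0,\delta)}+\chi_{[a,1/b)}\big)+\chi_{[\delta,a)}$, $\psi_0=\tfrac{1}{\sqrt{2\sqrt2}}\big(\chi_{[0,\delta)}+\chi_{[a,1/b)}\big)+\chi_{[\delta,a)}$, and $\beta_k=T_{ka}\beta_0$, $\gamma_k=T_{ka}\gamma_0$, $\psi_k=T_{ka}\psi_0$. Let $S^b f=\sum_k\langle f,\beta_k\rangle_{1/b}\beta_k$ and $S^\psi f=\sum_k\langle f,\psi_k\rangle_{1/b}\psi_k$ (these are the frame operators of the systems $(\sqrt b\beta_0,a,b)$ and $(\sqrt b\psi_0,a,b)$). Then: $(\sqrt b\beta_0,a,b)$ is a Weyl–Heisenberg frame with lower frame bound $1$ and upper frame bound $2$; $(\sqrt b\gamma_0,a,b)$ is a normalized tight Weyl–Heisenberg frame, i.e. $f=\sum_k\langle f,\gamma_k\rangle_{1/b}\gamma_k$ for all $f\in L^2(\mathbb R)$; $S^\psi(\beta_k)=\gamma_k$ for all $k\in\mathbb Z$; $S^\psi S^b S^\psi=I$; and $S^\psi=(S^b)^{-1/2}$.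
   Context: $T_{a}g(t)=g(t-a)$, $E_{b}g(t)=e^{2\pi i bt}g(t)$; $(g,a,b)$ is a Weyl–Heisenberg frame if $(E_{mb}T_{na}g)_{m,n\in\mathbb Z}$ is a frame for $L^2(\mathbb R)$, normalized tight if both frame bounds equal $1$. $\langle f,h\rangle_{1/b}(t)=\sum_{k\in\mathbb Z}f(t-k/b)\overline{h(t-k/b)}$. *)

theory Defs
  imports "HOL-Analysis.Analysis"
begin

text \<open>Elements of L2(R) are represented by square-integrable Borel functions real => complex;
  equality in L2 is equality almost everywhere w.r.t. Lebesgue measure.\<close>

definition L2 :: "(real \<Rightarrow> complex) set" where
  "L2 = {f. f \<in> borel_measurable lborel \<and> integrable lborel (\<lambda>x. (cmod (f x))\<^sup>2)}"

definition l2_inner :: "(real \<Rightarrow> complex) \<Rightarrow> (real \<Rightarrow> complex) \<Rightarrow> complex" where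
  "l2_inner f h = (LINT x|lborel. f x * cnj (h x))"

definition l2_normsq :: "(real \<Rightarrow> complex) \<Rightarrow> real" where
  "l2_normsq f = (LINT x|lborel. (cmod (f x))\<^sup>2)"

definition transl :: "real \<Rightarrow> (real \<Rightarrow> complex) \<Rightarrow> real \<Rightarrow> complex" where
  "transl a g = (\<lambda>t. g (t - a))"

definition modul :: "real \<Rightarrow> (real \<Rightarrow> complex) \<Rightarrow> real \<Rightarrow> complex" where
  "modul b g = (\<lambda>t. exp (2 * pi * \<i> * complex_of_real (b * t)) * g t)"

definition WH_frame_bounds :: "(real \<Rightarrow> complex) \<Rightarrow> real \<Rightarrow> real \<Rightarrow> real \<Rightarrow> real \<Rightarrow> bool" where
  "WH_frame_bounds g a b A B \<longleftrightarrow> g \<in> L2 \<and> 0 < A \<and> A \<le> B \<and>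
     (\<forall>f\<in>L2.
        (\<lambda>(m::int, n::int). (cmod (l2_inner f (modul (of_int m * b) (transl (of_int n * a) g))))\<^sup>2)
           summable_on UNIV \<and>
        A * l2_normsq f \<le> (\<Sum>\<^sub>\<infinity>(m::int, n::int) \<in> UNIV.
             (cmod (l2_inner f (modul (of_int m * b) (transl (of_int n * a) g))))\<^sup>2) \<and>
        (\<Sum>\<^sub>\<infinity>(m::int, n::int) \<in> UNIV.
             (cmod (l2_inner f (modul (of_int m * b) (transl (of_int n * a) g))))\<^sup>2) \<le> B * l2_normsq f)"

definition WH_frame :: "(real \<Rightarrow> complex) \<Rightarrow> real \<Rightarrow> real \<Rightarrow> bool" where
  "WH_frame g a b \<longleftrightarrow> (\<exists>A B. WH_frame_bounds g a b A B)"

definition normalized_tight_WH_frame :: "(real \<Rightarrow> complex) \<Rightarrow> real \<Rightarrow> real \<Rightarrow> bool" where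
  "normalized_tight_WH_frame g a b \<longleftrightarrow> WH_frame_bounds g a b 1 1"

definition per_inner :: "real \<Rightarrow> (real \<Rightarrow> complex) \<Rightarrow> (real \<Rightarrow> complex) \<Rightarrow> real \<Rightarrow> complex" where
  "per_inner b f h t = (\<Sum>\<^sub>\<infinity>k::int. f (t - of_int k / b) * cnj (h (t - of_int k / b)))"

definition bracket_op :: "real \<Rightarrow> real \<Rightarrow> (real \<Rightarrow> complex) \<Rightarrow> (real \<Rightarrow> complex) \<Rightarrow> real \<Rightarrow> complex" where
  "bracket_op a b phi0 f t =
     (\<Sum>\<^sub>\<infinity>k::int. per_inner b f (transl (of_int k * a) phi0) t * transl (of_int k * a) phi0 t)"

definition ind :: "real set \<Rightarrow> real \<Rightarrow> complex" where
  "ind S t = complex_of_real (indicator S t)"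

definition beta0 :: "real \<Rightarrow> real \<Rightarrow> real \<Rightarrow> complex" where
  "beta0 a b = ind {0..<1/b}"

definition gamma0 :: "real \<Rightarrow> real \<Rightarrow> real \<Rightarrow> complex" where
  "gamma0 a b = (let \<delta> = 1/b - a in
     (\<lambda>t. complex_of_real (1 / sqrt 2) * (ind {0..<\<delta>} t + ind {a..<1/b} t) + ind {\<delta>..<a} t))"

definition psi0 :: "real \<Rightarrow> real \<Rightarrow> real \<Rightarrow> complex" where
  "psi0 a b = (let \<delta> = 1/b - a in
     (\<lambda>t. complex_of_real (1 / sqrt (2 * sqrt 2)) * (ind {0..<\<delta>} t + ind {a..<1/b} t) + ind {\<delta>..<a} t))"

text \<open>R is (as an operator on L2) the inverse square root of S: R is a bounded positive
  operator on L2 with R^2 = S^{-1}, i.e. R(R(S f)) = f and S(R(R f)) = f (in L2) for all f.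
  (By uniqueness of positive square roots this determines R = S^{-1/2}.)\<close>
definition is_inv_sqrt :: "((real \<Rightarrow> complex) \<Rightarrow> real \<Rightarrow> complex) \<Rightarrow> ((real \<Rightarrow> complex) \<Rightarrow> real \<Rightarrow> complex) \<Rightarrow> bool" where
  "is_inv_sqrt S R \<longleftrightarrow>
     (\<forall>f\<in>L2. S f \<in> L2 \<and> R f \<in> L2) \<and>
     (\<exists>C. \<forall>f\<in>L2. l2_normsq (R f) \<le> C * l2_normsq f) \<and>
     (\<forall>f\<in>L2. Im (l2_inner (R f) f) = 0 \<and> 0 \<le> Re (l2_inner (R f) f)) \<and>
     (\<forall>f\<in>L2. (AE x in lborel. R (R (S f)) x = f x) \<and> (AE x in lborel. S (R (R f)) x = f x))"

end

theory Submission
  imports Defs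
begin

text \<open>If a window \<open>\<phi>\<close> vanishes outside \<open>[0, 1/b)\<close>, then for each shift \<open>n a\<close> the atoms
  \<open>E\<^bsub>m b\<^esub> T\<^bsub>n a\<^esub> \<phi>\<close> are \<open>\<phi>(\<cdot> - n a)\<close> times the orthonormal Fourier basis of \<open>[n a, n a + 1/b)\<close>.
  Parseval's identity on these intervals, summed over \<open>n\<close>, turns the frame sum of \<open>f\<close> into
  \<open>\<integral> |f|\<^sup>2 G\<close> with \<open>G t = \<Sum>\<^sub>n |\<phi>(t - n a)|\<^sup>2\<close>. Likewise only the term \<open>f t |\<phi>(t - k a)|\<^sup>2\<close> survives
  in \<open>\<langle>f, T\<^bsub>k a\<^esub> \<phi>\<rangle>\<^bsub>1/b\<^esub>(t) T\<^bsub>k a\<^esub> \<phi>(t)\<close>, so the frame operator is multiplication by \<open>G\<close>.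
  Since \<open>1/b \<le> 2 a\<close>, at most two translates overlap; for a step window taking the value \<open>c\<close>
  on \<open>[0, 1/b - a) \<union> [a, 1/b)\<close> and \<open>1\<close> on \<open>[1/b - a, a)\<close>, \<open>G\<close> is \<open>2 c\<^sup>2\<close> where two translates
  overlap and \<open>1\<close> elsewhere. Hence \<open>1 \<le> G\<^sub>\<beta> \<le> 2\<close>, \<open>G\<^sub>\<gamma> = 1\<close> and \<open>G\<^sub>\<psi>\<^sup>2 G\<^sub>\<beta> = 1\<close>, and every
  claim becomes an identity between multiplication operators.\<close>

section \<open>Square-integrable functions\<close>

lemma borel_measurable_cnj [measurable]: "cnj \<in> borel_measurable borel"
  by (intro borel_measurable_continuous_onI continuous_intros)

lemma borel_measurable_L2: "f \<in> L2 \<Longrightarrow> f \<in> borel_measurable borel"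
  by (simp add: L2_def)

lemma integrable_norm_sq_L2: "f \<in> L2 \<Longrightarrow> integrable lborel (\<lambda>x. (cmod (f x))\<^sup>2)"
  by (simp add: L2_def)

lemma L2_dominated:
  assumes [measurable]: "f \<in> borel_measurable borel" and w: "integrable lborel w"
    and bound: "\<And>x. (cmod (f x))\<^sup>2 \<le> w x"
  shows "f \<in> L2"
  unfolding L2_def
proof (intro CollectI conjI)
  show "integrable lborel (\<lambda>x. (cmod (f x))\<^sup>2)"
    by (rule Bochner_Integration.integrable_bound[OF w]) (use bound in \<open>auto intro: AE_I2 order_trans[OF _ abs_ge_self]\<close>)
qed simp

lemma l2_normsq_le_integral:
  assumes "f \<in> L2" "integrable lborel w" "\<And>x. (cmod (f x))\<^sup>2 \<le> w x"
  shows "l2_normsq f \<le> integral\<^sup>L lborel w"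
  unfolding l2_normsq_def using integrable_norm_sq_L2 assms by (intro integral_mono) auto

lemma L2_mult_bounded:
  assumes f: "f \<in> L2" and g [measurable]: "g \<in> borel_measurable borel" and B: "\<And>x. cmod (g x) \<le> B"
  shows "(\<lambda>x. g x * f x) \<in> L2"
proof (rule L2_dominated)
  have [measurable]: "f \<in> borel_measurable borel" using f by (rule borel_measurable_L2)
  show "(\<lambda>x. g x * f x) \<in> borel_measurable borel" by measurable
  show "integrable lborel (\<lambda>x. B\<^sup>2 * (cmod (f x))\<^sup>2)" using integrable_norm_sq_L2[OF f] by simp
  show "(cmod (g x * f x))\<^sup>2 \<le> B\<^sup>2 * (cmod (f x))\<^sup>2" for x
    using B[of x] by (simp add: norm_mult power_mult_distrib mult_right_mono power_mono)
qed

lemma L2_scale: "f \<in> L2 \<Longrightarrow> (\<lambda>x. c * f x) \<in> L2"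
  using L2_mult_bounded[of f "\<lambda>_. c" "cmod c"] by simp

lemma norm_add_sq_le: "(cmod (x + y))\<^sup>2 \<le> 2 * (cmod x)\<^sup>2 + 2 * (cmod y)\<^sup>2"
proof -
  have "(cmod (x + y))\<^sup>2 \<le> (cmod x + cmod y)\<^sup>2" by (simp add: norm_triangle_ineq power_mono)
  also have "\<dots> \<le> 2 * (cmod x)\<^sup>2 + 2 * (cmod y)\<^sup>2"
    using sum_squares_ge_zero[of "cmod x - cmod y" 0] by (simp add: power2_eq_square algebra_simps)
  finally show ?thesis .
qed

lemma L2_add:
  assumes f: "f \<in> L2" and g: "g \<in> L2" shows "(\<lambda>x. f x + g x) \<in> L2"
proof (rule L2_dominated)
  have [measurable]: "f \<in> borel_measurable borel" "g \<in> borel_measurable borel"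
    using f g by (simp_all add: borel_measurable_L2)
  show "(\<lambda>x. f x + g x) \<in> borel_measurable borel" by measurable
  show "integrable lborel (\<lambda>x. 2 * (cmod (f x))\<^sup>2 + 2 * (cmod (g x))\<^sup>2)"
    using integrable_norm_sq_L2[OF f] integrable_norm_sq_L2[OF g] by simp
qed (rule norm_add_sq_le)

lemma L2_diff: "f \<in> L2 \<Longrightarrow> g \<in> L2 \<Longrightarrow> (\<lambda>x. f x - g x) \<in> L2"
  using L2_add[of f "\<lambda>x. - 1 * g x"] L2_scale[of g "- 1"] by simp

lemma L2_zero: "(\<lambda>x. 0) \<in> L2"
  by (simp add: L2_def)

lemma L2_sum: "finite F \<Longrightarrow> (\<And>i. i \<in> F \<Longrightarrow> f i \<in> L2) \<Longrightarrow> (\<lambda>x. \<Sum>i\<in>F. f i x) \<in> L2"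
  by (induction F rule: finite_induct) (auto intro: L2_add L2_zero)

lemma l2_normsq_diff_le:
  assumes fg: "(\<lambda>t. f t - g t) \<in> L2" and gh: "(\<lambda>t. g t - h t) \<in> L2"
  shows "l2_normsq (\<lambda>t. f t - h t) \<le> 2 * l2_normsq (\<lambda>t. f t - g t) + 2 * l2_normsq (\<lambda>t. g t - h t)"
proof -
  have "(\<lambda>t. f t - h t) \<in> L2" using L2_add[OF fg gh] by simp
  moreover have "integrable lborel (\<lambda>t. 2 * (cmod (f t - g t))\<^sup>2 + 2 * (cmod (g t - h t))\<^sup>2)"
    using integrable_norm_sq_L2[OF fg] integrable_norm_sq_L2[OF gh] by simp
  moreover have "(cmod (f t - h t))\<^sup>2 \<le> 2 * (cmod (f t - g t))\<^sup>2 + 2 * (cmod (g t - h t))\<^sup>2" for t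
    using norm_add_sq_le[of "f t - g t" "g t - h t"] by simp
  ultimately have "l2_normsq (\<lambda>t. f t - h t)
      \<le> integral\<^sup>L lborel (\<lambda>t. 2 * (cmod (f t - g t))\<^sup>2 + 2 * (cmod (g t - h t))\<^sup>2)"
    by (rule l2_normsq_le_integral)
  then show ?thesis
    using integrable_norm_sq_L2[OF fg] integrable_norm_sq_L2[OF gh] by (simp add: l2_normsq_def)
qed

lemma L2_tendsto_zero_dominated:
  assumes [measurable]: "\<And>n. F n \<in> borel_measurable borel" and w: "integrable lborel w"
    and bound: "\<And>n t. (cmod (F n t))\<^sup>2 \<le> w t"
    and lim: "AE t in lborel. (\<lambda>n. F n t) \<longlonglongrightarrow> 0" and e: "e > 0"
  shows "\<exists>n. F n \<in> L2 \<and> l2_normsq (F n) < e"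
proof -
  have lim_sq: "AE t in lborel. (\<lambda>n. (cmod (F n t))\<^sup>2) \<longlonglongrightarrow> 0"
    using lim by eventually_elim (auto intro: tendsto_eq_intros)
  have bound_sq: "AE t in lborel. norm ((cmod (F n t))\<^sup>2) \<le> w t" for n
    using bound by simp
  have "(\<lambda>n. l2_normsq (F n)) \<longlonglongrightarrow> integral\<^sup>L lborel (\<lambda>t. 0::real)"
    unfolding l2_normsq_def
    using Bochner_Integration.integral_dominated_convergence[OF _ _ w lim_sq bound_sq] by simp
  then have "eventually (\<lambda>n. l2_normsq (F n) < e) sequentially"
    using e by (simp add: order_tendstoD(2))
  then obtain n where "l2_normsq (F n) < e" by (auto simp: eventually_sequentially)
  moreover have "F n \<in> L2" by (rule L2_dominated[OF _ w bound]) simp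
  ultimately show ?thesis by blast
qed

lemma integrable_mult_cnj_L2:
  assumes f: "f \<in> L2" and g: "g \<in> L2"
  shows "integrable lborel (\<lambda>x. f x * cnj (g x))"
proof (rule Bochner_Integration.integrable_bound)
  have [measurable]: "f \<in> borel_measurable borel" "g \<in> borel_measurable borel"
    using f g by (simp_all add: borel_measurable_L2)
  show "integrable lborel (\<lambda>x. (cmod (f x))\<^sup>2 + (cmod (g x))\<^sup>2)"
    using integrable_norm_sq_L2[OF f] integrable_norm_sq_L2[OF g] by simp
  show "(\<lambda>x. f x * cnj (g x)) \<in> borel_measurable lborel" by measurable
  show "AE x in lborel. norm (f x * cnj (g x)) \<le> norm ((cmod (f x))\<^sup>2 + (cmod (g x))\<^sup>2)"
  proof (rule AE_I2)
    fix x
    have "2 * (cmod (f x) * cmod (g x)) \<le> (cmod (f x))\<^sup>2 + (cmod (g x))\<^sup>2"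
      using sum_squares_ge_zero[of "cmod (f x) - cmod (g x)" 0] by (simp add: power2_eq_square algebra_simps)
    moreover have "0 \<le> cmod (f x) * cmod (g x)" by simp
    ultimately have "cmod (f x) * cmod (g x) \<le> (cmod (f x))\<^sup>2 + (cmod (g x))\<^sup>2" by linarith
    then show "norm (f x * cnj (g x)) \<le> norm ((cmod (f x))\<^sup>2 + (cmod (g x))\<^sup>2)"
      by (simp add: norm_mult)
  qed
qed

lemma l2_inner_self: "l2_inner f f = complex_of_real (l2_normsq f)"
proof -
  have "(\<lambda>x. f x * cnj (f x)) = (\<lambda>x. complex_of_real ((cmod (f x))\<^sup>2))"
    by (simp add: complex_norm_square[symmetric])
  then show ?thesis unfolding l2_inner_def l2_normsq_def
    by (simp only: integral_complex_of_real)
qed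

lemma l2_normsq_nonneg: "0 \<le> l2_normsq f"
  unfolding l2_normsq_def by simp

lemma l2_inner_cnj: "l2_inner g f = cnj (l2_inner f g)"
  unfolding l2_inner_def by (simp flip: Bochner_Integration.integral_cnj add: mult.commute)

lemma l2_inner_diff_left: "f \<in> L2 \<Longrightarrow> g \<in> L2 \<Longrightarrow> h \<in> L2 \<Longrightarrow>
   l2_inner (\<lambda>x. f x - g x) h = l2_inner f h - l2_inner g h"
  unfolding l2_inner_def by (simp add: left_diff_distrib integrable_mult_cnj_L2)

lemma l2_inner_diff_right: "f \<in> L2 \<Longrightarrow> g \<in> L2 \<Longrightarrow> h \<in> L2 \<Longrightarrow>
   l2_inner h (\<lambda>x. f x - g x) = l2_inner h f - l2_inner h g"
  by (subst (1 2 3) l2_inner_cnj) (simp add: l2_inner_diff_left)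

lemma l2_inner_scale_left: "l2_inner (\<lambda>x. c * f x) h = c * l2_inner f h"
  unfolding l2_inner_def by (simp add: mult.assoc)

lemma l2_inner_scale_right: "l2_inner h (\<lambda>x. c * f x) = cnj c * l2_inner h f"
  by (subst (1 2) l2_inner_cnj) (simp add: l2_inner_scale_left)

lemma l2_inner_sum_left:
  "finite F \<Longrightarrow> (\<And>i. i \<in> F \<Longrightarrow> f i \<in> L2) \<Longrightarrow> h \<in> L2 \<Longrightarrow>
   l2_inner (\<lambda>x. \<Sum>i\<in>F. f i x) h = (\<Sum>i\<in>F. l2_inner (f i) h)"
  unfolding l2_inner_def by (simp add: sum_distrib_right integrable_mult_cnj_L2)

lemma l2_inner_sum_right:
  "finite F \<Longrightarrow> (\<And>i. i \<in> F \<Longrightarrow> f i \<in> L2) \<Longrightarrow> h \<in> L2 \<Longrightarrow>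
   l2_inner h (\<lambda>x. \<Sum>i\<in>F. f i x) = (\<Sum>i\<in>F. l2_inner h (f i))"
  by (subst l2_inner_cnj) (simp add: l2_inner_sum_left flip: l2_inner_cnj)

text \<open>Both Bessel's inequality and the optimality of the Fourier coefficients are read off from
  this identity.\<close>
lemma l2_normsq_diff_orthonormal_sum:
  assumes h: "h \<in> L2" and F: "finite F" and u: "\<And>m. m \<in> F \<Longrightarrow> u m \<in> L2"
    and orth: "\<And>m k. m \<in> F \<Longrightarrow> k \<in> F \<Longrightarrow> l2_inner (u m) (u k) = (if m = k then 1 else 0)"
  shows "l2_normsq (\<lambda>x. h x - (\<Sum>m\<in>F. d m * u m x)) =
     l2_normsq h - (\<Sum>m\<in>F. (cmod (l2_inner h (u m)))\<^sup>2) + (\<Sum>m\<in>F. (cmod (l2_inner h (u m) - d m))\<^sup>2)"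
proof -
  define p where "p = (\<lambda>x. \<Sum>m\<in>F. d m * u m x)"
  define c where "c = (\<lambda>m. l2_inner h (u m))"
  have uL: "\<And>m. m \<in> F \<Longrightarrow> (\<lambda>x. d m * u m x) \<in> L2" using u by (rule L2_scale)
  have pL: "p \<in> L2" unfolding p_def using F uL by (rule L2_sum)
  have hp: "l2_inner h p = (\<Sum>m\<in>F. cnj (d m) * c m)"
    unfolding p_def c_def using F uL h by (simp add: l2_inner_sum_right l2_inner_scale_right)
  have pu: "l2_inner p (u k) = d k" if "k \<in> F" for k
    unfolding p_def using F uL u that
    by (simp add: l2_inner_sum_left l2_inner_scale_left orth if_distrib cong: if_cong)
  have pp: "l2_inner p p = (\<Sum>m\<in>F. d m * cnj (d m))"
    using F uL pL by (subst (2) p_def) (simp add: l2_inner_sum_right l2_inner_scale_right pu mult.commute)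
  have sq: "\<And>z. complex_of_real ((cmod z)\<^sup>2) = z * cnj z" by (simp add: complex_norm_square[symmetric])
  have "complex_of_real (l2_normsq (\<lambda>x. h x - p x))
      = l2_inner h h - l2_inner h p - (cnj (l2_inner h p) - l2_inner p p)"
    using h pL L2_diff[OF h pL]
    by (simp add: l2_inner_diff_left l2_inner_diff_right flip: l2_inner_self l2_inner_cnj[of p h])
  also have "\<dots> = complex_of_real (l2_normsq h - (\<Sum>m\<in>F. (cmod (c m))\<^sup>2) + (\<Sum>m\<in>F. (cmod (c m - d m))\<^sup>2))"
    unfolding hp pp of_real_add of_real_diff of_real_sum sq l2_inner_self[symmetric]
    by (simp add: algebra_simps sum.distrib sum_subtractf)
  finally show ?thesis unfolding p_def c_def of_real_eq_iff .
qed

section \<open>The Fourier basis of an interval\<close>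

definition wave :: "real \<Rightarrow> int \<Rightarrow> real \<Rightarrow> complex" where
  "wave b m t = exp (2 * pi * \<i> * complex_of_real (of_int m * b * t))"

definition fourier_basis :: "real \<Rightarrow> real \<Rightarrow> int \<Rightarrow> real \<Rightarrow> complex" where
  "fourier_basis b c m t = complex_of_real (sqrt b) * wave b m t * indicator {c..<c+1/b} t"

lemma wave_eq_exp_linear: "wave b m t = exp ((2 * pi * \<i> * of_int m * of_real b) * of_real t)"
  unfolding wave_def by (simp add: mult.assoc mult.left_commute)

lemma continuous_on_wave [continuous_intros]: "continuous_on A (wave b m)"
  unfolding wave_eq_exp_linear by (intro continuous_intros)

lemma borel_measurable_wave [measurable]: "wave b m \<in> borel_measurable borel"
  using continuous_on_wave by (rule borel_measurable_continuous_onI)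

lemma wave_mult: "wave b m t * wave b k t = wave b (m + k) t"
  unfolding wave_def by (simp add: exp_add[symmetric] algebra_simps)

lemma cnj_wave: "cnj (wave b m t) = wave b (- m) t"
  unfolding wave_def by (simp add: exp_cnj)

lemma wave_zero [simp]: "wave b 0 t = 1"
  unfolding wave_def by simp

lemma norm_wave [simp]: "cmod (wave b m t) = 1"
  unfolding wave_def by (simp add: norm_exp_eq_Re)

lemma wave_periodic:
  assumes "b \<noteq> 0" shows "wave b m (t + 1/b) = wave b m t"
proof -
  have "2 * pi * \<i> * complex_of_real (of_int m * b * (t + 1/b)) =
        2 * pi * \<i> * complex_of_real (of_int m * b * t) + 2 * pi * \<i> * of_int m"
    using assms by (simp add: field_simps)
  then have "wave b m (t + 1/b) = wave b m t * exp (2 * pi * \<i> * of_int m)"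
    unfolding wave_def by (simp add: exp_add)
  also have "exp (2 * pi * \<i> * of_int m) = 1"
    using exp_2pi_1_int[of m] by (simp add: mult_ac)
  finally show ?thesis by simp
qed

lemma integral_exp_linear:
  assumes "c \<le> d" "z \<noteq> 0"
  shows "integral {c..d} (\<lambda>t. exp (z * complex_of_real t)) = (exp (z * of_real d) - exp (z * of_real c)) / z"
proof -
  have "((\<lambda>t. exp (z * of_real t) / z) has_vector_derivative exp (z * t)) (at t within {c..d})" for t
    using assms
    by (intro derivative_eq_intros has_complex_derivative_imp_has_vector_derivative [unfolded o_def] | simp)+
  then have "((\<lambda>t. exp (z * of_real t)) has_integral exp (z * complex_of_real d)/z - exp (z * of_real c)/z) {c..d}"
    by (intro fundamental_theorem_of_calculus) (use assms in auto)
  then show ?thesis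
    by (simp add: diff_divide_distrib integral_unique)
qed

lemma integral_wave:
  assumes b: "b > 0"
  shows "integral {c..c+1/b} (wave b j) = (if j = 0 then 1/b else 0)"
proof (cases "j = 0")
  case False
  define z where "z = 2 * pi * \<i> * of_int j * of_real b"
  have "z \<noteq> 0" using False b by (simp add: z_def)
  moreover have "exp (z * of_real (c + 1/b)) = exp (z * of_real c)"
    using wave_periodic[of b j c] b unfolding wave_eq_exp_linear z_def by simp
  ultimately show ?thesis
    using False b integral_exp_linear[of c "c + 1/b" z] unfolding wave_eq_exp_linear z_def by simp
next
  case True
  then have "wave b j = (\<lambda>_. 1)" by auto
  then show ?thesis using True b by (simp add: scaleR_conv_of_real)
qed

lemma lebesgue_integral_indicator_eq_integral:
  fixes g :: "real \<Rightarrow> complex"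
  assumes g: "continuous_on UNIV g" and cd: "c \<le> d"
  shows "(LINT t|lborel. g t * indicator {c..<d} t) = integral {c..d} g"
proof -
  have [measurable]: "g \<in> borel_measurable borel" using g by (rule borel_measurable_continuous_onI)
  have "(LINT t|lborel. g t * indicator {c..<d} t) = (LINT t|lborel. indicator {c..d} t *\<^sub>R g t)"
    using AE_lborel_singleton[of d]
    by (intro integral_cong_AE) (auto elim!: eventually_mono simp: indicator_def)
  also have "\<dots> = integral {c..d} g"
    using set_borel_integral_eq_integral(2)[of "{c..d}" g] borel_integrable_compact[of "{c..d}" g]
      continuous_on_subset[OF g]
    unfolding set_integrable_def set_lebesgue_integral_def by simp
  finally show ?thesis .
qed

lemma integrable_indicator_Ico: "integrable lborel (\<lambda>t::real. indicator {c..<d} t :: real)"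
  by (cases "c \<le> d") (auto intro!: integrable_real_indicator simp: emeasure_lborel_Ico)

lemma fourier_basis_L2:
  assumes "b > 0" shows "fourier_basis b c m \<in> L2"
proof (rule L2_dominated)
  show "fourier_basis b c m \<in> borel_measurable borel" unfolding fourier_basis_def by measurable
  show "integrable lborel (\<lambda>t. b * indicator {c..<c+1/b} t)"
    using integrable_indicator_Ico[of c "c + 1/b"] by simp
  show "(cmod (fourier_basis b c m t))\<^sup>2 \<le> b * indicator {c..<c+1/b} t" for t
    using assms by (simp add: fourier_basis_def norm_mult indicator_def)
qed

lemma fourier_basis_orthonormal:
  assumes b: "b > 0"
  shows "l2_inner (fourier_basis b c m) (fourier_basis b c k) = (if m = k then 1 else 0)"
proof -
  have "fourier_basis b c m t * cnj (fourier_basis b c k t)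
      = (of_real b * wave b (m - k) t) * indicator {c..<c+1/b} t" for t
    using b by (simp add: fourier_basis_def cnj_wave wave_mult indicator_def algebra_simps flip: of_real_mult)
  then have "l2_inner (fourier_basis b c m) (fourier_basis b c k)
      = integral {c..c+1/b} (\<lambda>t. of_real b * wave b (m - k) t)"
    unfolding l2_inner_def using b
    by (simp only:) (intro lebesgue_integral_indicator_eq_integral continuous_intros, auto)
  also have "\<dots> = (if m = k then 1 else 0)"
    using b by (simp add: integral_wave)
  finally show ?thesis .
qed

section \<open>Uniform approximation by trigonometric polynomials\<close>

definition trig_poly :: "real \<Rightarrow> (real \<Rightarrow> complex) \<Rightarrow> bool" where
  "trig_poly b p \<longleftrightarrow> (\<exists>F d. finite F \<and> (\<forall>t. p t = (\<Sum>m\<in>F. d m * wave b m t)))"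

lemma trig_polyI: "finite F \<Longrightarrow> (\<And>t. p t = (\<Sum>m\<in>F. d m * wave b m t)) \<Longrightarrow> trig_poly b p"
  unfolding trig_poly_def by blast

lemma trig_poly_const: "trig_poly b (\<lambda>t. c)"
  by (rule trig_polyI[of "{0}" _ "\<lambda>_. c"]) auto

lemma trig_poly_wave: "trig_poly b (wave b m)"
  by (rule trig_polyI[of "{m}" _ "\<lambda>_. 1"]) auto

lemma trig_poly_add:
  assumes "trig_poly b p" "trig_poly b q" shows "trig_poly b (\<lambda>t. p t + q t)"
proof -
  obtain F d where F: "finite F" "\<And>t. p t = (\<Sum>m\<in>F. d m * wave b m t)"
    using assms(1) unfolding trig_poly_def by blast
  obtain G e where G: "finite G" "\<And>t. q t = (\<Sum>m\<in>G. e m * wave b m t)"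
    using assms(2) unfolding trig_poly_def by blast
  have extend: "(\<Sum>m\<in>H. f m * wave b m t) = (\<Sum>m\<in>F \<union> G. (if m \<in> H then f m else 0) * wave b m t)"
    if "H \<subseteq> F \<union> G" for H f t
    using F(1) G(1) that by (intro sum.mono_neutral_cong_left) auto
  show ?thesis
    by (rule trig_polyI[of "F \<union> G" _ "\<lambda>m. (if m \<in> F then d m else 0) + (if m \<in> G then e m else 0)"])
      (use F G in \<open>simp_all add: extend[of F] extend[of G] distrib_right sum.distrib\<close>)
qed

lemma trig_poly_scale:
  assumes "trig_poly b p" shows "trig_poly b (\<lambda>t. c * p t)"
proof -
  obtain F d where F: "finite F" "\<And>t. p t = (\<Sum>m\<in>F. d m * wave b m t)"
    using assms unfolding trig_poly_def by blast
  show ?thesis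
    by (rule trig_polyI[of F _ "\<lambda>m. c * d m"]) (use F in \<open>simp_all add: sum_distrib_left mult.assoc\<close>)
qed

lemma trig_poly_sum:
  "finite I \<Longrightarrow> (\<And>i. i \<in> I \<Longrightarrow> trig_poly b (p i)) \<Longrightarrow> trig_poly b (\<lambda>t. \<Sum>i\<in>I. p i t)"
  by (induction I rule: finite_induct) (auto intro: trig_poly_add trig_poly_const)

lemma trig_poly_wave_mult:
  assumes "trig_poly b q" shows "trig_poly b (\<lambda>t. wave b m t * q t)"
proof -
  obtain F d where F: "finite F" "\<And>t. q t = (\<Sum>m\<in>F. d m * wave b m t)"
    using assms unfolding trig_poly_def by blast
  show ?thesis
  proof (rule trig_polyI[of "(+) m ` F" _ "\<lambda>k. d (k - m)"])
    fix t
    have "(\<Sum>k\<in>(+) m ` F. d (k - m) * wave b k t) = (\<Sum>j\<in>F. d j * wave b (m + j) t)"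
      by (subst sum.reindex) (auto simp: inj_on_def)
    then show "wave b m t * q t = (\<Sum>k\<in>(+) m ` F. d (k - m) * wave b k t)"
      unfolding F(2) by (simp add: sum_distrib_left wave_mult[symmetric] mult_ac)
  qed (use F in simp)
qed

lemma trig_poly_mult:
  assumes "trig_poly b p" "trig_poly b q" shows "trig_poly b (\<lambda>t. p t * q t)"
proof -
  obtain F d where F: "finite F" "\<And>t. p t = (\<Sum>m\<in>F. d m * wave b m t)"
    using assms(1) unfolding trig_poly_def by blast
  have "trig_poly b (\<lambda>t. \<Sum>m\<in>F. d m * (wave b m t * q t))"
    using F(1) by (intro trig_poly_sum trig_poly_scale trig_poly_wave_mult assms(2))
  then show ?thesis
    unfolding F(2) by (simp add: sum_distrib_left sum_distrib_right mult_ac)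
qed

lemma bounded_linear_complex_decomp:
  assumes "bounded_linear (g :: complex \<Rightarrow> real)"
  shows "g z = Re z * g 1 + Im z * g \<i>"
proof -
  interpret bounded_linear g by fact
  have "z = Re z *\<^sub>R 1 + Im z *\<^sub>R \<i>" by (simp add: complex_eq_iff)
  then have "g z = g (Re z *\<^sub>R 1 + Im z *\<^sub>R \<i>)" by simp
  then show ?thesis by (simp add: add scale)
qed

lemma trig_poly_real_polynomial:
  assumes "real_polynomial_function (g :: complex \<Rightarrow> real)"
  shows "trig_poly b (\<lambda>t. complex_of_real (g (wave b 1 t)))"
  using assms
proof (induction g rule: real_polynomial_function.induct)
  case (linear g)
  have Re: "complex_of_real (Re (wave b 1 t)) = (wave b 1 t + wave b (-1) t) / 2" for t
    using complex_add_cnj[of "wave b 1 t"] by (simp add: cnj_wave)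
  have Im: "complex_of_real (Im (wave b 1 t)) = (wave b 1 t - wave b (-1) t) / (2 * \<i>)" for t
    using complex_diff_cnj[of "wave b 1 t"] by (simp add: cnj_wave field_simps)
  have "(\<lambda>t. complex_of_real (g (wave b 1 t))) =
      (\<lambda>t. (of_real (g 1) / 2) * wave b 1 t + (of_real (g 1) / 2) * wave b (-1) t
          + (of_real (g \<i>) / (2 * \<i>)) * wave b 1 t + (- of_real (g \<i>) / (2 * \<i>)) * wave b (-1) t)"
    by (rule ext, subst bounded_linear_complex_decomp[OF linear]) (simp add: Re Im field_simps)
  moreover have "trig_poly b \<dots>"
    by (intro trig_poly_add trig_poly_scale trig_poly_wave)
  ultimately show ?case by simp
qed (auto intro: trig_poly_const trig_poly_add trig_poly_mult)

lemma trig_poly_polynomial: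
  assumes "polynomial_function (P :: complex \<Rightarrow> complex)"
  shows "trig_poly b (\<lambda>t. P (wave b 1 t))"
proof -
  have "real_polynomial_function (\<lambda>z. Re (P z))" "real_polynomial_function (\<lambda>z. Im (P z))"
    using assms bounded_linear_Re bounded_linear_Im unfolding polynomial_function_def o_def by blast+
  then have "trig_poly b (\<lambda>t. complex_of_real (Re (P (wave b 1 t))) + \<i> * complex_of_real (Im (P (wave b 1 t))))"
    by (intro trig_poly_add trig_poly_scale trig_poly_real_polynomial)
  then show ?thesis by (simp add: complex_eq[symmetric])
qed

lemma wave_eq_imp_endpoints:
  assumes b: "b > 0" and x: "x \<in> {c..c+1/b}" and y: "y \<in> {c..c+1/b}" and eq: "wave b 1 x = wave b 1 y"
  shows "x = y \<or> {x, y} = {c, c + 1/b}"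
proof -
  obtain n :: int where "2 * pi * \<i> * complex_of_real (b * x) = 2 * pi * \<i> * complex_of_real (b * y) + (of_int (2 * n) * pi) * \<i>"
    using eq unfolding wave_def exp_eq by auto
  then have "\<i> * complex_of_real (2 * pi * (b * x)) = \<i> * complex_of_real (2 * pi * (b * y + of_int n))"
    by (simp add: algebra_simps)
  then have "complex_of_real (2 * pi * (b * x)) = complex_of_real (2 * pi * (b * y + of_int n))"
    by simp
  then have "b * x = b * y + of_int n"
    unfolding of_real_eq_iff using pi_gt_zero by simp
  then have xy: "x - y = of_int n / b" using b by (simp add: field_simps)
  moreover have "\<bar>x - y\<bar> \<le> 1/b" using x y by auto
  ultimately have "\<bar>real_of_int n\<bar> \<le> 1" using b by (simp add: abs_div divide_le_cancel)
  then have "n \<in> {-1, 0, 1}" by auto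
  then show ?thesis using xy x y by auto
qed

text \<open>Stone-Weierstrass on the circle: a continuous function with equal values at the end points
  factors through \<open>t \<mapsto> wave b 1 t\<close>, and polynomials in that variable are trigonometric
  polynomials.\<close>
lemma trig_poly_uniform_approx:
  assumes b: "b > 0" and cont: "continuous_on {c..c+1/b} \<phi>" and ends: "\<phi> c = \<phi> (c + 1/b)"
    and e: "e > 0"
  obtains p where "trig_poly b p" "\<And>t. t \<in> {c..c+1/b} \<Longrightarrow> cmod (\<phi> t - p t) < e"
proof -
  define T where "T = {c..c+1/b}"
  define K where "K = wave b 1 ` T"
  have cK: "compact K" unfolding K_def T_def by (intro compact_continuous_image continuous_on_wave) simp
  have q: "quotient_map (top_of_set T) (top_of_set K) (wave b 1)"
  proof (rule continuous_imp_quotient_map)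
    show "continuous_map (top_of_set T) (top_of_set K) (wave b 1)"
      by (auto simp: continuous_map_in_subtopology K_def intro: continuous_on_wave)
    show "compact_space (top_of_set T)" by (simp add: compact_space_subtopology T_def)
  qed (simp_all add: Hausdorff_space_subtopology K_def)
  have fib: "\<phi> x = \<phi> y"
    if "x \<in> topspace (top_of_set T)" "y \<in> topspace (top_of_set T)" "wave b 1 x = wave b 1 y" for x y
    using wave_eq_imp_endpoints[OF b, of x c y] that ends unfolding T_def doubleton_eq_iff by auto
  have "continuous_map (top_of_set T) euclidean \<phi>" using cont unfolding T_def by simp
  then obtain g where g: "continuous_map (top_of_set K) euclidean g"
    and gf: "\<And>x. x \<in> topspace (top_of_set T) \<Longrightarrow> g (wave b 1 x) = \<phi> x"
    by (rule quotient_map_lift_exists[OF q _ fib]) blast+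
  obtain P where P: "polynomial_function P" "\<forall>z\<in>K. norm (g z - P z) < e"
    using Stone_Weierstrass_polynomial_function[OF cK _ e] g by auto
  show ?thesis
  proof (rule that[OF trig_poly_polynomial[OF P(1)]])
    fix t assume "t \<in> {c..c+1/b}"
    then have "wave b 1 t \<in> K" "g (wave b 1 t) = \<phi> t" using gf[of t] unfolding K_def T_def by auto
    with P(2) show "cmod (\<phi> t - P (wave b 1 t)) < e" by auto
  qed
qed

section \<open>Approximation by continuous functions in \<open>L2\<close>\<close>

definition clip :: "real \<Rightarrow> complex \<Rightarrow> complex" where
  "clip M z = complex_of_real (max (-M) (min M (Re z))) + \<i> * complex_of_real (max (-M) (min M (Im z)))"

definition cutoff :: "real \<Rightarrow> real \<Rightarrow> nat \<Rightarrow> real \<Rightarrow> real" where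
  "cutoff c d k t = min 1 (real k * max 0 (min (t - c) (d - t)))"

lemma continuous_on_clip: "continuous_on A (clip M)"
  unfolding clip_def by (intro continuous_intros)

lemma borel_measurable_clip [measurable]: "clip M \<in> borel_measurable borel"
  by (rule borel_measurable_continuous_onI[OF continuous_on_clip])

lemma Re_clip [simp]: "Re (clip M z) = max (-M) (min M (Re z))"
  and Im_clip [simp]: "Im (clip M z) = max (-M) (min M (Im z))"
  by (simp_all add: clip_def)

lemma norm_clip_le:
  assumes "M \<ge> 0" shows "cmod (clip M z) \<le> cmod z"
proof -
  have "\<bar>max (-M) (min M x)\<bar> \<le> \<bar>x\<bar>" for x using assms by linarith
  then have "(max (-M) (min M x))\<^sup>2 \<le> x\<^sup>2" for x by (simp only: abs_le_square_iff)
  then show ?thesis unfolding norm_complex_def by (simp add: add_mono)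
qed

lemma norm_clip_bound:
  assumes "M \<ge> 0" shows "cmod (clip M z) \<le> 2 * M"
proof -
  have "\<bar>Re (clip M z)\<bar> \<le> M" "\<bar>Im (clip M z)\<bar> \<le> M" using assms by auto
  then show ?thesis using cmod_le[of "clip M z"] by linarith
qed

lemma clip_eq_self: "cmod z \<le> M \<Longrightarrow> clip M z = z"
  using abs_Re_le_cmod[of z] abs_Im_le_cmod[of z] by (simp add: clip_def complex_eq_iff)

lemma continuous_on_cutoff: "continuous_on A (cutoff c d k)"
  unfolding cutoff_def by (intro continuous_intros)

lemma borel_measurable_cutoff [measurable]: "cutoff c d k \<in> borel_measurable borel"
  by (rule borel_measurable_continuous_onI[OF continuous_on_cutoff])

lemma cutoff_bounds: "0 \<le> cutoff c d k t" "cutoff c d k t \<le> 1"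
  unfolding cutoff_def by simp_all

lemma cutoff_outside: "t \<notin> {c<..<d} \<Longrightarrow> cutoff c d k t = 0"
  unfolding cutoff_def by auto

lemma eventually_cutoff_eq_1:
  assumes "t \<in> {c<..<d}" shows "eventually (\<lambda>k. cutoff c d k t = 1) sequentially"
proof -
  define m where "m = min (t - c) (d - t)"
  have m: "m > 0" using assms by (simp add: m_def)
  obtain N :: nat where N: "real N \<ge> 1 / m" using real_arch_simple by blast
  show ?thesis
  proof (rule eventually_sequentiallyI[of N])
    fix k assume "N \<le> k"
    then have "real k * m \<ge> 1" using N m by (simp add: field_simps order_trans)
    then show "cutoff c d k t = 1" unfolding cutoff_def m_def[symmetric] using m by simp
  qed
qed

lemma L2_truncation_approx:
  assumes h: "h \<in> L2" and supp: "\<And>t. t \<notin> {c..<d} \<Longrightarrow> h t = 0" and e: "e > 0"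
  shows "\<exists>J. (\<lambda>t. h t - cutoff c d J t * clip (real J) (h t)) \<in> L2
     \<and> l2_normsq (\<lambda>t. h t - cutoff c d J t * clip (real J) (h t)) < e"
proof (rule L2_tendsto_zero_dominated)
  have [measurable]: "h \<in> borel_measurable borel" using h by (rule borel_measurable_L2)
  show "(\<lambda>t. h t - cutoff c d J t * clip (real J) (h t)) \<in> borel_measurable borel" for J
    by measurable
  show "integrable lborel (\<lambda>t. 4 * (cmod (h t))\<^sup>2)" using integrable_norm_sq_L2[OF h] by simp
  show "(cmod (h t - cutoff c d J t * clip (real J) (h t)))\<^sup>2 \<le> 4 * (cmod (h t))\<^sup>2" for J t
  proof -
    have "cmod (cutoff c d J t * clip (real J) (h t)) \<le> 1 * cmod (h t)"
      unfolding norm_mult using cutoff_bounds norm_clip_le[of "real J" "h t"]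
      by (intro mult_mono) auto
    then have "cmod (h t - cutoff c d J t * clip (real J) (h t)) \<le> 2 * cmod (h t)"
      using norm_triangle_ineq4[of "h t" "cutoff c d J t * clip (real J) (h t)"] by linarith
    then have "(cmod (h t - cutoff c d J t * clip (real J) (h t)))\<^sup>2 \<le> (2 * cmod (h t))\<^sup>2"
      by (rule power_mono) simp
    then show ?thesis by (simp add: power_mult_distrib)
  qed
  show "AE t in lborel. (\<lambda>J. h t - cutoff c d J t * clip (real J) (h t)) \<longlonglongrightarrow> 0"
    using AE_lborel_singleton[of c]
  proof eventually_elim
    case (elim t)
    show ?case
    proof (cases "t \<in> {c<..<d}")
      case True
      obtain N :: nat where "real N \<ge> cmod (h t)" using real_arch_simple by blast
      then have "eventually (\<lambda>J. cmod (h t) \<le> real J) sequentially"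
        by (intro eventually_sequentiallyI[of N]) auto
      with eventually_cutoff_eq_1[OF True]
      have "eventually (\<lambda>J. h t - cutoff c d J t * clip (real J) (h t) = 0) sequentially"
        by eventually_elim (simp add: clip_eq_self)
      then show ?thesis by (rule tendsto_eventually)
    next
      case False
      with elim supp[of t] show ?thesis by (simp add: cutoff_outside)
    qed
  qed
qed (rule e)

lemma norm_cutoff_clip_diff_le:
  "cmod (cutoff c d J t * clip (real J) z - cutoff c d J t * clip (real J) w) \<le> 4 * real J"
proof -
  have "cmod (cutoff c d J t * clip (real J) z - cutoff c d J t * clip (real J) w)
      = cutoff c d J t * cmod (clip (real J) z - clip (real J) w)"
    using cutoff_bounds(1)[of c d J t] by (simp add: right_diff_distrib[symmetric] norm_mult)
  also have "\<dots> \<le> 1 * (2 * real J + 2 * real J)"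
    using cutoff_bounds norm_triangle_ineq4[of "clip (real J) z" "clip (real J) w"]
      norm_clip_bound[of "real J" z] norm_clip_bound[of "real J" w]
    by (intro mult_mono) auto
  finally show ?thesis by simp
qed

lemma AE_lborel_not_in_negligible:
  assumes "negligible N" shows "AE x in lborel. x \<notin> N"
proof -
  have "AE x in lebesgue. x \<notin> N"
    using assms negligible_iff_null_sets AE_not_in by blast
  then show ?thesis by (simp add: AE_completion_iff)
qed

text \<open>A measurable function is an a.e. limit of continuous functions; clipping and cutting off
  make the convergence dominated.\<close>
lemma L2_continuous_approx_truncation:
  assumes h: "h \<in> L2" and e: "e > 0"
  shows "\<exists>\<phi>. continuous_on UNIV \<phi> \<and> (\<forall>t. t \<notin> {c<..<d} \<longrightarrow> \<phi> t = 0) \<and>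
     (\<lambda>t. cutoff c d J t * clip (real J) (h t) - \<phi> t) \<in> L2 \<and>
     l2_normsq (\<lambda>t. cutoff c d J t * clip (real J) (h t) - \<phi> t) < e"
proof -
  have [measurable]: "h \<in> borel_measurable borel" using h by (rule borel_measurable_L2)
  have "h measurable_on UNIV"
    using lebesgue_measurable_imp_measurable_on[OF measurable_completion, of h UNIV] by simp
  then obtain N g where N: "negligible N" and g: "\<And>n. continuous_on UNIV (g n)"
    and lim: "\<And>x. x \<notin> N \<Longrightarrow> (\<lambda>n. g n x) \<longlonglongrightarrow> h x"
    unfolding measurable_on_def by auto
  have [measurable]: "g n \<in> borel_measurable borel" for n
    using g by (rule borel_measurable_continuous_onI)
  define q where "q = (\<lambda>t. cutoff c d J t * clip (real J) (h t))"
  define r where "r = (\<lambda>n t. cutoff c d J t * clip (real J) (g n t))"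
  have "\<exists>n. (\<lambda>t. q t - r n t) \<in> L2 \<and> l2_normsq (\<lambda>t. q t - r n t) < e"
  proof (rule L2_tendsto_zero_dominated)
    show "(\<lambda>t. q t - r n t) \<in> borel_measurable borel" for n unfolding q_def r_def by measurable
    show "integrable lborel (\<lambda>t. (4 * real J)\<^sup>2 * indicator {c..<d} t)"
      using integrable_indicator_Ico[of c d] by simp
    show "(cmod (q t - r n t))\<^sup>2 \<le> (4 * real J)\<^sup>2 * indicator {c..<d} t" for n t
    proof (cases "t \<in> {c<..<d}")
      case True
      have "(cmod (q t - r n t))\<^sup>2 \<le> (4 * real J)\<^sup>2"
        unfolding q_def r_def by (intro power_mono norm_cutoff_clip_diff_le) simp
      then show ?thesis using True by simp
    qed (simp add: q_def r_def cutoff_outside)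
    show "AE t in lborel. (\<lambda>n. q t - r n t) \<longlonglongrightarrow> 0"
      using AE_lborel_not_in_negligible[OF N]
    proof eventually_elim
      case (elim x)
      have "isCont (clip (real J)) (h x)"
        using continuous_on_clip continuous_on_eq_continuous_at by blast
      then have "(\<lambda>n. clip (real J) (g n x)) \<longlonglongrightarrow> clip (real J) (h x)"
        using lim[OF elim] by (rule isCont_tendsto_compose)
      then have "(\<lambda>n. r n x) \<longlonglongrightarrow> q x"
        unfolding q_def r_def by (intro tendsto_intros)
      then have "(\<lambda>n. q x - r n x) \<longlonglongrightarrow> q x - q x"
        by (intro tendsto_intros)
      then show ?case by simp
    qed
  qed (rule e)
  then obtain n where "(\<lambda>t. q t - r n t) \<in> L2" "l2_normsq (\<lambda>t. q t - r n t) < e" by blast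
  moreover have "continuous_on UNIV (r n)"
    unfolding r_def by (intro continuous_intros continuous_on_cutoff
        continuous_on_compose2[OF continuous_on_clip g]) auto
  moreover have "r n t = 0" if "t \<notin> {c<..<d}" for t
    using that by (simp add: r_def cutoff_outside)
  ultimately show ?thesis unfolding q_def by (intro exI[of _ "r n"]) simp
qed

lemma L2_continuous_approx:
  assumes h: "h \<in> L2" and supp: "\<And>t. t \<notin> {c..<d} \<Longrightarrow> h t = 0" and e: "e > 0"
  obtains \<phi> where "continuous_on UNIV \<phi>" "\<And>t. t \<notin> {c<..<d} \<Longrightarrow> \<phi> t = 0"
    "(\<lambda>t. h t - \<phi> t) \<in> L2" "l2_normsq (\<lambda>t. h t - \<phi> t) < e"
proof -
  obtain J where J: "(\<lambda>t. h t - cutoff c d J t * clip (real J) (h t)) \<in> L2"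
    "l2_normsq (\<lambda>t. h t - cutoff c d J t * clip (real J) (h t)) < e / 4"
    using L2_truncation_approx[OF h supp, where e="e / 4"] e by auto
  obtain \<phi> where \<phi>: "continuous_on UNIV \<phi>" "\<And>t. t \<notin> {c<..<d} \<Longrightarrow> \<phi> t = 0"
    "(\<lambda>t. cutoff c d J t * clip (real J) (h t) - \<phi> t) \<in> L2"
    "l2_normsq (\<lambda>t. cutoff c d J t * clip (real J) (h t) - \<phi> t) < e / 4"
    using L2_continuous_approx_truncation[OF h, where e="e / 4" and c=c and d=d and J=J] e by auto
  show ?thesis
  proof (rule that[OF \<phi>(1,2)])
    show "(\<lambda>t. h t - \<phi> t) \<in> L2" using L2_add[OF J(1) \<phi>(3)] by simp
    show "l2_normsq (\<lambda>t. h t - \<phi> t) < e"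
      using l2_normsq_diff_le[OF J(1) \<phi>(3)] J(2) \<phi>(4) by linarith
  qed
qed

section \<open>Parseval's identity on an interval\<close>

lemma l2_normsq_le_bound_indicator:
  assumes "f \<in> borel_measurable borel" "\<And>t. (cmod (f t))\<^sup>2 \<le> M * indicator {c..<d} t" "c \<le> d"
  shows "f \<in> L2" "l2_normsq f \<le> M * (d - c)"
proof -
  have int: "integrable lborel (\<lambda>t. M * indicator {c..<d} t)"
    using integrable_indicator_Ico[of c d] by simp
  show L2: "f \<in> L2" by (rule L2_dominated[OF assms(1) int assms(2)])
  have "l2_normsq f \<le> integral\<^sup>L lborel (\<lambda>t. M * indicator {c..<d} t)"
    using L2 int assms(2) by (rule l2_normsq_le_integral)
  then show "l2_normsq f \<le> M * (d - c)" using assms(3) by simp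
qed

lemma fourier_basis_total:
  assumes b: "b > 0" and h: "h \<in> L2" and supp: "\<And>t. t \<notin> {c..<c+1/b} \<Longrightarrow> h t = 0" and e: "e > 0"
  obtains F d where "finite F" "l2_normsq (\<lambda>t. h t - (\<Sum>m\<in>F. d m * fourier_basis b c m t)) < e"
proof -
  obtain \<phi> where \<phi>c: "continuous_on UNIV \<phi>" and \<phi>0: "\<And>t. t \<notin> {c<..<c+1/b} \<Longrightarrow> \<phi> t = 0"
    and \<phi>L: "(\<lambda>t. h t - \<phi> t) \<in> L2" and \<phi>n: "l2_normsq (\<lambda>t. h t - \<phi> t) < e / 4"
    using L2_continuous_approx[OF h supp, where e="e / 4"] e by auto
  define \<eta> where "\<eta> = sqrt (b * e / 8)"
  have \<eta>: "\<eta> > 0" "\<eta>\<^sup>2 / b = e / 8" using b e by (simp_all add: \<eta>_def)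
  have ends: "\<phi> c = \<phi> (c + 1/b)" using \<phi>0[of c] \<phi>0[of "c + 1/b"] by simp
  obtain p where p: "trig_poly b p" and app: "\<And>t. t \<in> {c..c+1/b} \<Longrightarrow> cmod (\<phi> t - p t) < \<eta>"
    by (rule trig_poly_uniform_approx[OF b continuous_on_subset[OF \<phi>c] ends \<eta>(1)]) auto
  obtain F d where F: "finite F" and pF: "\<And>t. p t = (\<Sum>m\<in>F. d m * wave b m t)"
    using p unfolding trig_poly_def by blast
  define d' where "d' = (\<lambda>m. d m / complex_of_real (sqrt b))"
  have p_eq: "(\<Sum>m\<in>F. d' m * fourier_basis b c m t) = p t * indicator {c..<c+1/b} t" for t
    unfolding pF d'_def fourier_basis_def using b by (simp add: sum_distrib_right mult.assoc)
  have close: "(cmod (\<phi> t - p t * indicator {c..<c+1/b} t))\<^sup>2 \<le> \<eta>\<^sup>2 * indicator {c..<c+1/b} t" for t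
  proof (cases "t \<in> {c..<c+1/b}")
    case True
    then show ?thesis using app[of t] \<eta> by (simp add: power_mono less_imp_le)
  qed (simp add: \<phi>0)
  have [measurable]: "\<phi> \<in> borel_measurable borel" using \<phi>c by (rule borel_measurable_continuous_onI)
  have "p = (\<lambda>t. \<Sum>m\<in>F. d m * wave b m t)" by (simp add: fun_eq_iff pF)
  then have [measurable]: "p \<in> borel_measurable borel" by simp
  have "c \<le> c + 1/b" using b by (simp add: less_imp_le)
  note bound = l2_normsq_le_bound_indicator[OF _ close this]
  have L: "(\<lambda>t. \<phi> t - p t * indicator {c..<c+1/b} t) \<in> L2"
    and N: "l2_normsq (\<lambda>t. \<phi> t - p t * indicator {c..<c+1/b} t) \<le> \<eta>\<^sup>2 * (c + 1/b - c)"
    by (rule bound, measurable)+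
  have "\<eta>\<^sup>2 * (c + 1/b - c) = e / 8" using \<eta>(2) by simp
  then have "l2_normsq (\<lambda>t. h t - p t * indicator {c..<c+1/b} t) < e"
    using l2_normsq_diff_le[OF \<phi>L L] \<phi>n N e by linarith
  then show ?thesis using that[OF F, of d'] by (simp add: p_eq)
qed

lemma has_sum_nonneg_from_finite_sums:
  fixes f :: "'a \<Rightarrow> real"
  assumes nonneg: "\<And>x. x \<in> A \<Longrightarrow> f x \<ge> 0"
    and upper: "\<And>F. finite F \<Longrightarrow> F \<subseteq> A \<Longrightarrow> sum f F \<le> S"
    and approx: "\<And>e. e > 0 \<Longrightarrow> \<exists>F. finite F \<and> F \<subseteq> A \<and> S - e < sum f F"
  shows "(f has_sum S) A"
  unfolding has_sum_def
proof (rule order_tendstoI)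
  fix a assume "a < S"
  then obtain F0 where F0: "finite F0" "F0 \<subseteq> A" "a < sum f F0"
    using approx[of "S - a"] by auto
  have "a < sum f Y" if "finite Y" "F0 \<subseteq> Y" "Y \<subseteq> A" for Y
  proof -
    have "sum f F0 \<le> sum f Y" using that nonneg by (intro sum_mono2) auto
    then show ?thesis using F0(3) by linarith
  qed
  then show "eventually (\<lambda>F. a < sum f F) (finite_subsets_at_top A)"
    unfolding eventually_finite_subsets_at_top using F0 by blast
next
  fix a assume "S < a"
  then show "eventually (\<lambda>F. sum f F < a) (finite_subsets_at_top A)"
    unfolding eventually_finite_subsets_at_top using upper by force
qed

theorem parseval_fourier_basis:
  assumes b: "b > 0" and h: "h \<in> L2" and supp: "\<And>t. t \<notin> {c..<c+1/b} \<Longrightarrow> h t = 0"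
  shows "((\<lambda>m. (cmod (l2_inner h (fourier_basis b c m)))\<^sup>2) has_sum l2_normsq h) UNIV"
proof (rule has_sum_nonneg_from_finite_sums)
  define coeff where "coeff m = l2_inner h (fourier_basis b c m)" for m
  have residual: "l2_normsq (\<lambda>t. h t - (\<Sum>m\<in>F. d m * fourier_basis b c m t)) =
      l2_normsq h - (\<Sum>m\<in>F. (cmod (coeff m))\<^sup>2) + (\<Sum>m\<in>F. (cmod (coeff m - d m))\<^sup>2)"
    if "finite F" for F d
    unfolding coeff_def
    by (rule l2_normsq_diff_orthonormal_sum[OF h that fourier_basis_L2[OF b] fourier_basis_orthonormal[OF b]])
  show "(\<Sum>m\<in>F. (cmod (l2_inner h (fourier_basis b c m)))\<^sup>2) \<le> l2_normsq h" if "finite F" for F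
    using residual[OF that, of coeff] l2_normsq_nonneg[of "\<lambda>t. h t - (\<Sum>m\<in>F. coeff m * fourier_basis b c m t)"]
    unfolding coeff_def by simp
  fix e :: real assume "e > 0"
  then obtain F d where F: "finite F" and "l2_normsq (\<lambda>t. h t - (\<Sum>m\<in>F. d m * fourier_basis b c m t)) < e"
    using fourier_basis_total[OF b h supp] by blast
  then have "l2_normsq h - e < (\<Sum>m\<in>F. (cmod (coeff m))\<^sup>2)"
    unfolding residual[OF F] using sum_nonneg[of F "\<lambda>m. (cmod (coeff m - d m))\<^sup>2"] by simp
  then show "\<exists>F. finite F \<and> F \<subseteq> UNIV \<and> l2_normsq h - e < (\<Sum>m\<in>F. (cmod (l2_inner h (fourier_basis b c m)))\<^sup>2)"
    using F unfolding coeff_def by blast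
qed simp

lemma filterlim_symmetric_int_intervals:
  "filterlim (\<lambda>N::nat. {- int N..int N}) (finite_subsets_at_top UNIV) sequentially"
  unfolding filterlim_finite_subsets_at_top
proof (intro allI impI)
  fix X :: "int set" assume X: "finite X \<and> X \<subseteq> UNIV"
  define M where "M = Max (abs ` X)"
  have "\<bar>x\<bar> \<le> M" if "x \<in> X" for x
    unfolding M_def using X that by (intro Max_ge) auto
  then show "eventually (\<lambda>N. finite {- int N..int N} \<and> X \<subseteq> {- int N..int N} \<and> {- int N..int N} \<subseteq> UNIV) sequentially"
    by (intro eventually_sequentiallyI[of "nat M"]) fastforce
qed

lemma has_sum_integral_nonneg:
  fixes g :: "int \<Rightarrow> real \<Rightarrow> real"
  assumes meas: "\<And>n. g n \<in> borel_measurable lborel" and nonneg: "\<And>n t. g n t \<ge> 0"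
    and hs: "\<And>t. ((\<lambda>n. g n t) has_sum w t) UNIV" and w: "integrable lborel w"
  shows "((\<lambda>n. integral\<^sup>L lborel (g n)) has_sum integral\<^sup>L lborel w) UNIV"
proof (rule has_sum_nonneg_from_finite_sums)
  have sum_le: "(\<Sum>n\<in>F. g n t) \<le> w t" if "finite F" for F t
    using has_sum_mono2[OF has_sum_finite[OF that] hs[of t]] nonneg by auto
  have gint: "integrable lborel (g n)" for n
    using sum_le[of "{n}"] nonneg
    by (intro Bochner_Integration.integrable_bound[OF w meas] AE_I2) (auto intro: order_trans[OF _ abs_ge_self])
  have sum_int: "integral\<^sup>L lborel (\<lambda>t. \<Sum>n\<in>F. g n t) = (\<Sum>n\<in>F. integral\<^sup>L lborel (g n))" for F
    using gint by simp
  show "integral\<^sup>L lborel (g n) \<ge> 0" for n using nonneg by simp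
  show "(\<Sum>n\<in>F. integral\<^sup>L lborel (g n)) \<le> integral\<^sup>L lborel w" if "finite F" for F
    unfolding sum_int[symmetric] using gint w sum_le[OF that] by (intro integral_mono) auto
  fix e :: real assume e: "e > 0"
  define S where "S = (\<lambda>(N::nat) t. \<Sum>n\<in>{- int N..int N}. g n t)"
  have lim: "AE t in lborel. (\<lambda>N. S N t) \<longlonglongrightarrow> w t"
    unfolding S_def using hs filterlim_compose[OF _ filterlim_symmetric_int_intervals]
    by (auto simp: has_sum_def)
  have bound: "AE t in lborel. norm (S N t) \<le> w t" for N
    unfolding S_def using nonneg sum_le by (simp add: sum_nonneg)
  have "S N \<in> borel_measurable lborel" for N
    unfolding S_def using meas by simp
  then have "(\<lambda>N. integral\<^sup>L lborel (S N)) \<longlonglongrightarrow> integral\<^sup>L lborel w"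
    using Bochner_Integration.integral_dominated_convergence[OF _ _ w lim bound] w by simp
  then have "eventually (\<lambda>N. integral\<^sup>L lborel w - e < integral\<^sup>L lborel (S N)) sequentially"
    using e by (intro order_tendstoD(1)) auto
  then obtain N where "integral\<^sup>L lborel w - e < integral\<^sup>L lborel (S N)"
    by (auto simp: eventually_sequentially)
  then show "\<exists>F. finite F \<and> F \<subseteq> UNIV \<and> integral\<^sup>L lborel w - e < (\<Sum>n\<in>F. integral\<^sup>L lborel (g n))"
    unfolding S_def sum_int by (intro exI[of _ "{- int N..int N}"]) auto
qed

section \<open>Painless windows\<close>

definition shift_sum_sq :: "real \<Rightarrow> (real \<Rightarrow> complex) \<Rightarrow> real \<Rightarrow> real" where
  "shift_sum_sq a \<phi> t = (\<Sum>\<^sub>\<infinity>n::int. (cmod (\<phi> (t - of_int n * a)))\<^sup>2)"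

lemma shift_sum_sq_nonneg: "0 \<le> shift_sum_sq a \<phi> t"
  unfolding shift_sum_sq_def by (simp add: infsum_nonneg)

text \<open>The name refers to the painless nonorthogonal expansions of Daubechies, Grossmann and Meyer.\<close>
locale painless_window =
  fixes a b :: real and \<phi> :: "real \<Rightarrow> complex" and B :: real
  assumes a_pos: "a > 0" and b_pos: "b > 0" and at_most_two_overlaps: "1/b \<le> 2 * a"
    and borel_measurable_window [measurable]: "\<phi> \<in> borel_measurable borel"
    and norm_window_le: "\<And>x. cmod (\<phi> x) \<le> B"
    and window_support: "\<And>x. \<phi> x \<noteq> 0 \<Longrightarrow> 0 \<le> x \<and> x < 1/b"
begin

abbreviation frame_coeff :: "(real \<Rightarrow> complex) \<Rightarrow> int \<Rightarrow> int \<Rightarrow> complex" where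
  "frame_coeff f m n \<equiv>
     l2_inner f (modul (of_int m * b) (transl (of_int n * a) (\<lambda>t. complex_of_real (sqrt b) * \<phi> t)))"

lemma window_shift_nonzero_index:
  assumes "\<phi> (t - of_int n * a) \<noteq> 0" shows "n = \<lfloor>t / a\<rfloor> \<or> n = \<lfloor>t / a\<rfloor> - 1"
proof -
  have "0 \<le> t - of_int n * a" "t - of_int n * a < 2 * a"
    using window_support[OF assms] at_most_two_overlaps by auto
  then have "of_int n \<le> t / a" "t / a < of_int (n + 2)"
    using a_pos by (auto simp: field_simps)
  then have "n \<le> \<lfloor>t / a\<rfloor>" "\<lfloor>t / a\<rfloor> < n + 2"
    by (simp_all add: le_floor_iff floor_less_iff)
  then show ?thesis by auto
qed

lemma has_sum_shift_sum_sq: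
  "((\<lambda>n::int. (cmod (\<phi> (t - of_int n * a)))\<^sup>2) has_sum
     (cmod (\<phi> (a * frac (t / a))))\<^sup>2 + (cmod (\<phi> (a * frac (t / a) + a)))\<^sup>2) UNIV"
proof (rule has_sum_finite_neutralI[of "{\<lfloor>t / a\<rfloor> - 1, \<lfloor>t / a\<rfloor>}"])
  show "(cmod (\<phi> (t - of_int n * a)))\<^sup>2 = 0" if "n \<in> UNIV - {\<lfloor>t / a\<rfloor> - 1, \<lfloor>t / a\<rfloor>}" for n
    using window_shift_nonzero_index[of t n] that by auto
  have residue: "a * frac (t / a) = t - of_int \<lfloor>t / a\<rfloor> * a"
    using a_pos by (simp add: frac_def field_simps)
  show "(cmod (\<phi> (a * frac (t / a))))\<^sup>2 + (cmod (\<phi> (a * frac (t / a) + a)))\<^sup>2 =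
      (\<Sum>n\<in>{\<lfloor>t / a\<rfloor> - 1, \<lfloor>t / a\<rfloor>}. (cmod (\<phi> (t - of_int n * a)))\<^sup>2)"
    unfolding residue by (simp add: algebra_simps)
qed auto

lemma shift_sum_sq_eq:
  "shift_sum_sq a \<phi> t = (cmod (\<phi> (a * frac (t / a))))\<^sup>2 + (cmod (\<phi> (a * frac (t / a) + a)))\<^sup>2"
  unfolding shift_sum_sq_def using has_sum_shift_sum_sq by (rule infsumI)

lemma borel_measurable_shift_sum_sq [measurable]: "shift_sum_sq a \<phi> \<in> borel_measurable borel"
  unfolding shift_sum_sq_eq[abs_def] frac_def by measurable

lemma shift_sum_sq_le: "shift_sum_sq a \<phi> t \<le> 2 * B\<^sup>2"
proof -
  have "(cmod (\<phi> x))\<^sup>2 \<le> B\<^sup>2" for x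
    using norm_window_le[of x] by (intro power_mono) auto
  then show ?thesis unfolding shift_sum_sq_eq by (smt (verit))
qed

lemma window_L2: "\<phi> \<in> L2"
proof (rule L2_dominated)
  show "integrable lborel (\<lambda>t. B\<^sup>2 * indicator {0..<1/b} t)"
    using integrable_indicator_Ico[of 0 "1/b"] by simp
  show "(cmod (\<phi> x))\<^sup>2 \<le> B\<^sup>2 * indicator {0..<1/b} x" for x
    using window_support[of x] norm_window_le[of x] by (cases "\<phi> x = 0") (auto intro: power_mono)
qed simp

lemma L2_mult_cnj_shifted_window: "f \<in> L2 \<Longrightarrow> (\<lambda>t. f t * cnj (\<phi> (t - c))) \<in> L2"
  using L2_mult_bounded[of f "\<lambda>t. cnj (\<phi> (t - c))" B] norm_window_le by (simp add: mult.commute)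

lemma integrable_weighted_norm_sq:
  assumes "f \<in> L2" shows "integrable lborel (\<lambda>t. (cmod (f t))\<^sup>2 * shift_sum_sq a \<phi> t)"
proof (rule Bochner_Integration.integrable_bound)
  have [measurable]: "f \<in> borel_measurable borel" using assms by (rule borel_measurable_L2)
  show "integrable lborel (\<lambda>t. 2 * B\<^sup>2 * (cmod (f t))\<^sup>2)" using integrable_norm_sq_L2[OF assms] by simp
  show "(\<lambda>t. (cmod (f t))\<^sup>2 * shift_sum_sq a \<phi> t) \<in> borel_measurable lborel" by measurable
  show "AE t in lborel. norm ((cmod (f t))\<^sup>2 * shift_sum_sq a \<phi> t) \<le> norm (2 * B\<^sup>2 * (cmod (f t))\<^sup>2)"
  proof (rule AE_I2)
    fix t
    have "shift_sum_sq a \<phi> t * (cmod (f t))\<^sup>2 \<le> 2 * B\<^sup>2 * (cmod (f t))\<^sup>2"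
      using shift_sum_sq_le by (rule mult_right_mono) simp
    then show "norm ((cmod (f t))\<^sup>2 * shift_sum_sq a \<phi> t) \<le> norm (2 * B\<^sup>2 * (cmod (f t))\<^sup>2)"
      using shift_sum_sq_nonneg[of a \<phi> t] by (simp add: abs_mult mult.commute)
  qed
qed

lemma frame_coeff_eq:
  "frame_coeff f m n =
     l2_inner (\<lambda>t. f t * cnj (\<phi> (t - of_int n * a))) (fourier_basis b (of_int n * a) m)"
  unfolding l2_inner_def
proof (intro Bochner_Integration.integral_cong refl)
  fix t
  show "f t * cnj (modul (of_int m * b) (transl (of_int n * a) (\<lambda>t. complex_of_real (sqrt b) * \<phi> t)) t) =
        f t * cnj (\<phi> (t - of_int n * a)) * cnj (fourier_basis b (of_int n * a) m t)"
  proof (cases "\<phi> (t - of_int n * a) = 0")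
    case False
    then have "t \<in> {of_int n * a..<of_int n * a + 1/b}" using window_support by force
    then show ?thesis by (simp add: modul_def transl_def fourier_basis_def wave_def mult_ac)
  qed (simp add: modul_def transl_def)
qed

lemma has_sum_frame_coeffs_at_shift:
  assumes f: "f \<in> L2"
  shows "((\<lambda>m. (cmod (frame_coeff f m n))\<^sup>2)
     has_sum (LINT t|lborel. (cmod (f t))\<^sup>2 * (cmod (\<phi> (t - of_int n * a)))\<^sup>2)) UNIV"
proof -
  have "f t * cnj (\<phi> (t - of_int n * a)) = 0" if "t \<notin> {of_int n * a..<of_int n * a + 1/b}" for t
    using window_support[of "t - of_int n * a"] that by (cases "\<phi> (t - of_int n * a) = 0") auto
  from parseval_fourier_basis[OF b_pos L2_mult_cnj_shifted_window[OF f] this]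
  show ?thesis unfolding frame_coeff_eq l2_normsq_def by (simp add: norm_mult power_mult_distrib)
qed

lemma has_sum_frame_coeffs:
  assumes f: "f \<in> L2"
  shows "((\<lambda>(m::int, n::int). (cmod (frame_coeff f m n))\<^sup>2)
          has_sum (LINT t|lborel. (cmod (f t))\<^sup>2 * shift_sum_sq a \<phi> t)) UNIV"
proof -
  define c where "c = (\<lambda>(n::int, m::int). (cmod (frame_coeff f m n))\<^sup>2)"
  have [measurable]: "f \<in> borel_measurable borel" using f by (rule borel_measurable_L2)
  have inner: "((\<lambda>m. c (n, m)) has_sum
      (LINT t|lborel. (cmod (f t))\<^sup>2 * (cmod (\<phi> (t - of_int n * a)))\<^sup>2)) UNIV" for n
    unfolding c_def using has_sum_frame_coeffs_at_shift[OF f] by simp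
  have outer: "((\<lambda>n. LINT t|lborel. (cmod (f t))\<^sup>2 * (cmod (\<phi> (t - of_int n * a)))\<^sup>2)
      has_sum (LINT t|lborel. (cmod (f t))\<^sup>2 * shift_sum_sq a \<phi> t)) UNIV"
    using has_sum_cmult_right[OF has_sum_shift_sum_sq[folded shift_sum_sq_eq]]
    by (intro has_sum_integral_nonneg integrable_weighted_norm_sq[OF f]) simp_all
  have "c summable_on UNIV \<times> UNIV"
    using summable_on_SigmaI[OF inner has_sum_imp_summable[OF outer]] by (simp add: c_def case_prod_unfold)
  then have "(c has_sum (LINT t|lborel. (cmod (f t))\<^sup>2 * shift_sum_sq a \<phi> t)) (UNIV \<times> UNIV)"
    using has_sum_SigmaI[OF inner outer] by simp
  then show ?thesis
    by (subst (asm) has_sum_swap) (simp add: c_def case_prod_unfold)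
qed

theorem WH_frame_bounds_if_shift_sum_sq_bounds:
  assumes "0 < A" "A \<le> C" and lower: "\<And>t. A \<le> shift_sum_sq a \<phi> t" and upper: "\<And>t. shift_sum_sq a \<phi> t \<le> C"
  shows "WH_frame_bounds (\<lambda>t. complex_of_real (sqrt b) * \<phi> t) a b A C"
  unfolding WH_frame_bounds_def
proof (intro conjI ballI L2_scale window_L2 assms(1,2))
  fix f assume f: "f \<in> L2"
  note coeffs = has_sum_frame_coeffs[OF f]
  then show "(\<lambda>(m::int, n::int). (cmod (frame_coeff f m n))\<^sup>2) summable_on UNIV"
    by (rule has_sum_imp_summable)
  have int: "integrable lborel (\<lambda>t. (cmod (f t))\<^sup>2)" "integrable lborel (\<lambda>t. (cmod (f t))\<^sup>2 * shift_sum_sq a \<phi> t)"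
    using f by (rule integrable_norm_sq_L2, rule integrable_weighted_norm_sq)
  have "A * l2_normsq f = (LINT t|lborel. A * (cmod (f t))\<^sup>2)" unfolding l2_normsq_def by simp
  also have "\<dots> \<le> (LINT t|lborel. (cmod (f t))\<^sup>2 * shift_sum_sq a \<phi> t)"
    using int lower by (intro integral_mono) (auto simp: mult.commute intro: mult_right_mono)
  finally show "A * l2_normsq f \<le> (\<Sum>\<^sub>\<infinity>(m::int, n::int) \<in> UNIV. (cmod (frame_coeff f m n))\<^sup>2)"
    unfolding infsumI[OF coeffs] .
  have "(LINT t|lborel. (cmod (f t))\<^sup>2 * shift_sum_sq a \<phi> t) \<le> (LINT t|lborel. C * (cmod (f t))\<^sup>2)"
    using int upper by (intro integral_mono) (auto simp: mult.commute intro: mult_right_mono)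
  also have "\<dots> = C * l2_normsq f" unfolding l2_normsq_def by simp
  finally show "(\<Sum>\<^sub>\<infinity>(m::int, n::int) \<in> UNIV. (cmod (frame_coeff f m n))\<^sup>2) \<le> C * l2_normsq f"
    unfolding infsumI[OF coeffs] .
qed

lemma per_inner_mult_shifted_window:
  "per_inner b f (transl (of_int k * a) \<phi>) t * transl (of_int k * a) \<phi> t
     = f t * (cmod (\<phi> (t - of_int k * a)))\<^sup>2"
proof (cases "\<phi> (t - of_int k * a) = 0")
  case False
  have "f (t - of_int j / b) * cnj (transl (of_int k * a) \<phi> (t - of_int j / b)) = 0" if "j \<noteq> 0" for j
  proof (rule ccontr)
    assume "f (t - of_int j / b) * cnj (transl (of_int k * a) \<phi> (t - of_int j / b)) \<noteq> 0"
    then have "\<phi> (t - of_int j / b - of_int k * a) \<noteq> 0" by (auto simp: transl_def)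
    with window_support[OF this] window_support[OF False]
    have "of_int j / b < 1 / b" "- (1 / b) < of_int j / b" by auto
    then have "of_int j < (1::real)" "- 1 < (of_int j :: real)" using b_pos by (simp_all add: field_simps)
    with that show False by linarith
  qed
  then have "((\<lambda>j. f (t - of_int j / b) * cnj (transl (of_int k * a) \<phi> (t - of_int j / b))) has_sum
          f t * cnj (transl (of_int k * a) \<phi> t)) UNIV"
    by (intro has_sum_finite_neutralI[of "{0}"]) auto
  then have "per_inner b f (transl (of_int k * a) \<phi>) t = f t * cnj (\<phi> (t - of_int k * a))"
    unfolding per_inner_def transl_def by (rule infsumI)
  moreover have "cnj z * z = complex_of_real ((cmod z)\<^sup>2)" for z
    using complex_norm_square[of z] by (simp add: mult.commute)
  ultimately show ?thesis by (simp add: transl_def mult.assoc)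
qed (simp add: transl_def)

lemma bracket_op_eq: "bracket_op a b \<phi> f t = complex_of_real (shift_sum_sq a \<phi> t) * f t"
proof -
  have "((\<lambda>k. per_inner b f (transl (of_int k * a) \<phi>) t * transl (of_int k * a) \<phi> t)
      has_sum f t * complex_of_real (shift_sum_sq a \<phi> t)) UNIV"
    unfolding per_inner_mult_shifted_window
    using has_sum_cmult_right[OF has_sum_of_real[OF has_sum_shift_sum_sq[folded shift_sum_sq_eq]]] by simp
  then show ?thesis unfolding bracket_op_def by (simp add: infsumI mult.commute)
qed

lemma L2_bracket_op: "f \<in> L2 \<Longrightarrow> bracket_op a b \<phi> f \<in> L2"
  unfolding bracket_op_eq[abs_def]
  by (rule L2_mult_bounded[where B="2 * B\<^sup>2"]) (use shift_sum_sq_le shift_sum_sq_nonneg in auto)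

lemma l2_normsq_bracket_op_le:
  assumes f: "f \<in> L2" shows "l2_normsq (bracket_op a b \<phi> f) \<le> (2 * B\<^sup>2)\<^sup>2 * l2_normsq f"
proof -
  have "(cmod (bracket_op a b \<phi> f t))\<^sup>2 \<le> (2 * B\<^sup>2)\<^sup>2 * (cmod (f t))\<^sup>2" for t
    unfolding bracket_op_eq norm_mult power_mult_distrib[symmetric]
    using shift_sum_sq_le shift_sum_sq_nonneg by (intro power_mono mult_right_mono) auto
  moreover have "integrable lborel (\<lambda>t. (2 * B\<^sup>2)\<^sup>2 * (cmod (f t))\<^sup>2)"
    using integrable_norm_sq_L2[OF f] by simp
  ultimately have "l2_normsq (bracket_op a b \<phi> f) \<le> (LINT t|lborel. (2 * B\<^sup>2)\<^sup>2 * (cmod (f t))\<^sup>2)"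
    using l2_normsq_le_integral[OF L2_bracket_op[OF f]] by blast
  then show ?thesis by (simp add: l2_normsq_def)
qed

lemma l2_inner_bracket_op_self:
  "l2_inner (bracket_op a b \<phi> f) f = complex_of_real (LINT t|lborel. shift_sum_sq a \<phi> t * (cmod (f t))\<^sup>2)"
proof -
  have "bracket_op a b \<phi> f t * cnj (f t) = complex_of_real (shift_sum_sq a \<phi> t * (cmod (f t))\<^sup>2)" for t
    unfolding bracket_op_eq using complex_norm_square[of "f t"] by (simp add: mult.assoc)
  then show ?thesis unfolding l2_inner_def by (simp only: integral_complex_of_real)
qed

end

theorem is_inv_sqrt_bracket_op:
  assumes \<phi>: "painless_window a b \<phi> B" and \<psi>: "painless_window a b \<psi> C"
    and inv: "\<And>t. (shift_sum_sq a \<psi> t)\<^sup>2 * shift_sum_sq a \<phi> t = 1"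
  shows "is_inv_sqrt (bracket_op a b \<phi>) (bracket_op a b \<psi>)"
  unfolding is_inv_sqrt_def
proof (intro conjI ballI exI)
  interpret \<phi>: painless_window a b \<phi> B by (rule \<phi>)
  interpret \<psi>: painless_window a b \<psi> C by (rule \<psi>)
  fix f assume f: "f \<in> L2"
  show "bracket_op a b \<phi> f \<in> L2" "bracket_op a b \<psi> f \<in> L2"
    using f by (rule \<phi>.L2_bracket_op, rule \<psi>.L2_bracket_op)
  show "l2_normsq (bracket_op a b \<psi> f) \<le> (2 * C\<^sup>2)\<^sup>2 * l2_normsq f"
    using f by (rule \<psi>.l2_normsq_bracket_op_le)
  show "Im (l2_inner (bracket_op a b \<psi> f) f) = 0" "0 \<le> Re (l2_inner (bracket_op a b \<psi> f) f)"
    unfolding \<psi>.l2_inner_bracket_op_self using shift_sum_sq_nonneg by simp_all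
  have "complex_of_real ((shift_sum_sq a \<psi> x)\<^sup>2 * shift_sum_sq a \<phi> x) = 1" for x
    using inv by simp
  then show "AE x in lborel. bracket_op a b \<psi> (bracket_op a b \<psi> (bracket_op a b \<phi> f)) x = f x"
    and "AE x in lborel. bracket_op a b \<phi> (bracket_op a b \<psi> (bracket_op a b \<psi> f)) x = f x"
    by (simp_all add: \<phi>.bracket_op_eq \<psi>.bracket_op_eq power2_eq_square mult_ac)
qed

section \<open>Step windows\<close>

definition step_window :: "real \<Rightarrow> real \<Rightarrow> real \<Rightarrow> real \<Rightarrow> complex" where
  "step_window a b c x = complex_of_real
     (c * (indicator {0..<1/b - a} x + indicator {a..<1/b} x) + indicator {1/b - a..<a} x)"

text \<open>\<open>a * frac (t / a)\<close> is the position of \<open>t\<close> in its period \<open>[k a, k a + a)\<close>, whose initial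
  segment of length \<open>1/b - a\<close> is covered by both \<open>[k a - a, k a - a + 1/b)\<close> and \<open>[k a, k a + 1/b)\<close>.\<close>
definition in_overlap :: "real \<Rightarrow> real \<Rightarrow> real \<Rightarrow> bool" where
  "in_overlap a b t \<longleftrightarrow> a * frac (t / a) < 1/b - a"

lemma gamma0_eq_step_window: "gamma0 a b = step_window a b (1 / sqrt 2)"
  unfolding gamma0_def step_window_def ind_def Let_def by (simp add: fun_eq_iff)

lemma psi0_eq_step_window: "psi0 a b = step_window a b (1 / sqrt (2 * sqrt 2))"
  unfolding psi0_def step_window_def ind_def Let_def by (simp add: fun_eq_iff)

lemma abs_psi0_level_le_1: "\<bar>1 / sqrt (2 * sqrt 2)\<bar> \<le> (1::real)"
proof -
  have "1 \<le> sqrt (2::real)" by simp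
  then have "1 \<le> 2 * sqrt (2::real)" by linarith
  then show ?thesis by simp
qed

locale redundancy_1_to_2 =
  fixes a b :: real
  assumes a_pos: "0 < a" and a_le: "a \<le> 1/b" and le_twice_a: "1/b \<le> 2 * a"
begin

lemma b_pos: "0 < b"
proof -
  have "0 < 1/b" using a_pos a_le by linarith
  then show ?thesis by simp
qed

lemma beta0_eq_step_window: "beta0 a b = step_window a b 1"
  unfolding beta0_def step_window_def ind_def using a_le le_twice_a
  by (auto simp: fun_eq_iff indicator_def)

lemma painless_window_step_window:
  assumes "\<bar>c\<bar> \<le> 1" shows "painless_window a b (step_window a b c) 3"
proof
  show "b > 0" by (rule b_pos)
  show "cmod (step_window a b c x) \<le> 3" for x
    using assms unfolding step_window_def indicator_def by auto
  show "0 \<le> x \<and> x < 1/b" if "step_window a b c x \<noteq> 0" for x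
  proof (rule ccontr)
    assume "\<not> (0 \<le> x \<and> x < 1/b)"
    then have "step_window a b c x = 0"
      using a_le le_twice_a by (auto simp: step_window_def indicator_def)
    with that show False by simp
  qed
  show "step_window a b c \<in> borel_measurable borel"
    unfolding step_window_def[abs_def] by measurable
qed (use a_pos le_twice_a in auto)

lemma step_window_shift:
  "step_window a b c (t - of_int k * a) =
     complex_of_real (indicator {0..<1/b} (t - of_int k * a) * (if in_overlap a b t then c else 1))"
proof -
  define s where "s = t - of_int k * a"
  have "frac (t / a) = frac (s / a)"
    using a_pos frac_add_of_int_right[of "s / a" k] by (simp add: s_def field_simps)
  moreover have "step_window a b c s =
      complex_of_real (indicator {0..<1/b} s * (if a * frac (s / a) < 1/b - a then c else 1))"
  proof -
    consider "s < 0 \<or> 1/b \<le> s" | "0 \<le> s" "s < a" | "a \<le> s" "s < 1/b" by linarith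
    then show ?thesis
    proof cases
      case 1
      then show ?thesis using a_le le_twice_a by (auto simp: step_window_def indicator_def)
    next
      case 2
      then have "a * frac (s / a) = s" using a_pos by (simp add: frac_eq)
      then show ?thesis using 2 a_le le_twice_a by (auto simp: step_window_def indicator_def)
    next
      case 3
      then have "frac (s / a) = s / a - 1"
        using a_pos le_twice_a frac_add_of_int_right[of "s / a - 1" 1] by (simp add: frac_eq field_simps)
      then have "a * frac (s / a) = s - a" using a_pos by (simp add: field_simps)
      then show ?thesis using 3 a_le le_twice_a by (auto simp: step_window_def indicator_def)
    qed
  qed
  ultimately show ?thesis by (simp add: s_def in_overlap_def)
qed

lemma shift_sum_sq_step_window:
  assumes "\<bar>c\<bar> \<le> 1"
  shows "shift_sum_sq a (step_window a b c) t = (if in_overlap a b t then 2 * c\<^sup>2 else 1)"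
proof -
  interpret painless_window a b "step_window a b c" 3
    using assms by (rule painless_window_step_window)
  have "(cmod (step_window a b c r))\<^sup>2 + (cmod (step_window a b c (r + a)))\<^sup>2 =
      (if r < 1/b - a then 2 * c\<^sup>2 else 1)" if "0 \<le> r" "r < a" for r
    using that a_le le_twice_a by (auto simp: step_window_def indicator_def power2_eq_square)
  moreover have "0 \<le> a * frac (t / a)" "a * frac (t / a) < a" using a_pos by (simp_all add: frac_lt_1)
  ultimately show ?thesis unfolding shift_sum_sq_eq in_overlap_def by blast
qed

sublocale \<beta>: painless_window a b "beta0 a b" 3
  unfolding beta0_eq_step_window by (rule painless_window_step_window) simp

sublocale \<gamma>: painless_window a b "gamma0 a b" 3
  unfolding gamma0_eq_step_window by (rule painless_window_step_window) simp

sublocale \<psi>: painless_window a b "psi0 a b" 3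
  unfolding psi0_eq_step_window by (rule painless_window_step_window[OF abs_psi0_level_le_1])

lemma shift_sum_sq_beta0: "shift_sum_sq a (beta0 a b) t = (if in_overlap a b t then 2 else 1)"
  unfolding beta0_eq_step_window by (simp add: shift_sum_sq_step_window)

lemma shift_sum_sq_gamma0: "shift_sum_sq a (gamma0 a b) t = 1"
  unfolding gamma0_eq_step_window by (simp add: shift_sum_sq_step_window power_divide)

lemma shift_sum_sq_psi0: "shift_sum_sq a (psi0 a b) t = (if in_overlap a b t then 1 / sqrt 2 else 1)"
  unfolding psi0_eq_step_window
  by (simp add: shift_sum_sq_step_window[OF abs_psi0_level_le_1] power_divide)

lemma shift_sum_sq_psi0_sq_beta0: "(shift_sum_sq a (psi0 a b) t)\<^sup>2 * shift_sum_sq a (beta0 a b) t = 1"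
  by (simp add: shift_sum_sq_psi0 shift_sum_sq_beta0 power_divide)

lemma transl_gamma0:
  "transl (of_int k * a) (gamma0 a b) t =
     complex_of_real (if in_overlap a b t then 1 / sqrt 2 else 1) * transl (of_int k * a) (beta0 a b) t"
  unfolding transl_def gamma0_eq_step_window beta0_eq_step_window step_window_shift by simp

end

theorem mainTheorem14:
  fixes a b :: real
  assumes "a > 0" and "b > 0" and "1/2 \<le> a * b" and "a * b \<le> 1"
  shows "WH_frame_bounds (\<lambda>t. complex_of_real (sqrt b) * beta0 a b t) a b 1 2
    \<and> normalized_tight_WH_frame (\<lambda>t. complex_of_real (sqrt b) * gamma0 a b t) a b
    \<and> (\<forall>f\<in>L2. AE x in lborel. f x = bracket_op a b (gamma0 a b) f x)
    \<and> (\<forall>k::int. AE x in lborel.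
          bracket_op a b (psi0 a b) (transl (of_int k * a) (beta0 a b)) x
          = transl (of_int k * a) (gamma0 a b) x)
    \<and> (\<forall>f\<in>L2. AE x in lborel.
          bracket_op a b (psi0 a b) (bracket_op a b (beta0 a b) (bracket_op a b (psi0 a b) f)) x = f x)
    \<and> is_inv_sqrt (bracket_op a b (beta0 a b)) (bracket_op a b (psi0 a b))"
proof -
  interpret redundancy_1_to_2 a b
    using assms by unfold_locales (auto simp: field_simps)
  have "complex_of_real ((shift_sum_sq a (psi0 a b) x)\<^sup>2 * shift_sum_sq a (beta0 a b) x) = 1" for x
    by (simp only: shift_sum_sq_psi0_sq_beta0 of_real_1)
  then have inv: "complex_of_real (shift_sum_sq a (psi0 a b) x) *
      (complex_of_real (shift_sum_sq a (beta0 a b) x) * (complex_of_real (shift_sum_sq a (psi0 a b) x) * z)) = z"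
    for x z by (simp add: power2_eq_square mult_ac)
  show ?thesis
  proof (intro conjI ballI allI AE_I2)
    show "WH_frame_bounds (\<lambda>t. complex_of_real (sqrt b) * beta0 a b t) a b 1 2"
      by (rule \<beta>.WH_frame_bounds_if_shift_sum_sq_bounds) (simp_all add: shift_sum_sq_beta0)
    show "normalized_tight_WH_frame (\<lambda>t. complex_of_real (sqrt b) * gamma0 a b t) a b"
      unfolding normalized_tight_WH_frame_def
      by (rule \<gamma>.WH_frame_bounds_if_shift_sum_sq_bounds) (simp_all add: shift_sum_sq_gamma0)
    show "f x = bracket_op a b (gamma0 a b) f x" for f x
      by (simp add: \<gamma>.bracket_op_eq shift_sum_sq_gamma0)
    show "bracket_op a b (psi0 a b) (transl (of_int k * a) (beta0 a b)) x = transl (of_int k * a) (gamma0 a b) x"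
      for k x by (simp add: \<psi>.bracket_op_eq shift_sum_sq_psi0 transl_gamma0)
    show "bracket_op a b (psi0 a b) (bracket_op a b (beta0 a b) (bracket_op a b (psi0 a b) f)) x = f x" for f x
      by (simp only: \<psi>.bracket_op_eq \<beta>.bracket_op_eq inv)
    show "is_inv_sqrt (bracket_op a b (beta0 a b)) (bracket_op a b (psi0 a b))"
      using is_inv_sqrt_bracket_op \<beta>.painless_window_axioms \<psi>.painless_window_axioms
        shift_sum_sq_psi0_sq_beta0 by blast
  qed
qed

end
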